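(* For every $n\geq1$, $T_n(I-S)=(I-S)W_n$ as operators on $H^2$. Consequently $\mathrm{span}\{(I-S)h_k:k\ge2\}$ is invariant under every $T_n$, and $1-z$ is a cyclic vector for $\{T_n:n\ge1\}$ in $H^2$ (i.e. $\mathrm{span}\{1-z^n:n\ge1\}$ is dense in $H^2$).
   Context: $H^2$ is the Hardy space on the open unit disk. $S$ is the shift operator $Sf(z)=zf(z)$ on $H^2$. $T_nf(z)=f(z^n)$ and $W_nf(z)=\frac{1-z^n}{1-z}f(z^n)$ for $n\ge1$. For $k\geq 2$, $h_k(z)=\frac{1}{1-z}\big(\mathrm{Log}(1-z^k)-\mathrm{Log}(1-z)-\ln k\big)$ with $\mathrm{Log}$ the principal branch. *)

theory Defs
  imports "HOL-Complex_Analysis.Complex_Analysis"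
begin

definition taylor_coeff :: "(complex \<Rightarrow> complex) \<Rightarrow> nat \<Rightarrow> complex" where
  "taylor_coeff f n = (deriv ^^ n) f 0 / of_nat (fact n)"

text \<open>The Hardy space H^2 of the unit disk: holomorphic functions on the open unit
  disk with square-summable Taylor coefficients (values outside the disk are irrelevant).\<close>
definition H2 :: "(complex \<Rightarrow> complex) set" where
  "H2 = {f. f holomorphic_on ball 0 1 \<and> summable (\<lambda>n. (cmod (taylor_coeff f n))^2)}"

definition h2_norm :: "(complex \<Rightarrow> complex) \<Rightarrow> real" where
  "h2_norm f = sqrt (\<Sum>n. (cmod (taylor_coeff f n))^2)"

definition shiftS :: "(complex \<Rightarrow> complex) \<Rightarrow> (complex \<Rightarrow> complex)" where
  "shiftS f = (\<lambda>z. z * f z)"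

definition IminusS :: "(complex \<Rightarrow> complex) \<Rightarrow> (complex \<Rightarrow> complex)" where
  "IminusS f = (\<lambda>z. f z - shiftS f z)"

definition Top :: "nat \<Rightarrow> (complex \<Rightarrow> complex) \<Rightarrow> (complex \<Rightarrow> complex)" where
  "Top n f = (\<lambda>z. f (z ^ n))"

definition Wop :: "nat \<Rightarrow> (complex \<Rightarrow> complex) \<Rightarrow> (complex \<Rightarrow> complex)" where
  "Wop n f = (\<lambda>z. (1 - z ^ n) / (1 - z) * f (z ^ n))"

definition hk :: "nat \<Rightarrow> complex \<Rightarrow> complex" where
  "hk k z = (Ln (1 - z ^ k) - Ln (1 - z) - of_real (ln (real k))) / (1 - z)"

text \<open>Linear span (finite complex linear combinations) of the (I-S)h_k, k \<ge> 2,
  as elements of H^2, i.e. identified up to equality on the open unit disk.\<close>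
definition hspan :: "(complex \<Rightarrow> complex) set" where
  "hspan = {g. \<exists>F c. finite F \<and> F \<subseteq> {2..} \<and>
      (\<forall>z\<in>ball 0 1. g z = (\<Sum>k\<in>F. c k * IminusS (hk k) z))}"

end

theory Submission
  imports Defs
begin

text \<open>On the disk \<open>I - S\<close> is multiplication by \<open>1 - z\<close>, so \<open>T\<^sub>n(I - S) = (I - S)W\<^sub>n\<close> is the
  identity \<open>(1 - z\<^sup>n) f(z\<^sup>n) = (1 - z) \<cdot> (1 - z\<^sup>n)/(1 - z) \<cdot> f(z\<^sup>n)\<close>. The functions
  \<open>\<phi>\<^sub>k = (I - S)h\<^sub>k = Log(1 - z\<^sup>k) - Log(1 - z) - ln k\<close> satisfy \<open>\<phi>\<^sub>k(z\<^sup>n) = \<phi>\<^sub>n\<^sub>k(z) - \<phi>\<^sub>n(z)\<close>,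
  which gives the invariance of their span.

  For density, pass to Taylor coefficients \<open>a\<^sub>m\<close> of \<open>f\<close>. The polynomial \<open>c\<^sub>1(1 - z) + \<dots> + c\<^sub>K(1 - z\<^sup>K)\<close> has
  constant coefficient \<open>\<Sum> c\<^sub>n\<close> and \<open>m\<close>-th coefficient \<open>-c\<^sub>m\<close>. Choosing \<open>c\<^sub>n = -a\<^sub>n\<close> for
  \<open>n \<le> M\<close> and adding the average \<open>A/K\<close> of \<open>A = a\<^sub>0 + \<dots> + a\<^sub>M\<close> to every \<open>c\<^sub>n\<close> matches the constant
  term, and the error consists of the tail of \<open>(a\<^sub>m)\<close> beyond \<open>M\<close> plus \<open>K\<close> copies of \<open>A/K\<close>,
  whose squared norm \<open>|A|\<^sup>2/K\<close> tends to \<open>0\<close> as \<open>K \<rightarrow> \<infinity>\<close>.\<close>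

lemma higher_deriv_sum:
  fixes f :: "'i \<Rightarrow> complex \<Rightarrow> complex"
  assumes "finite I" "\<And>i. i \<in> I \<Longrightarrow> f i holomorphic_on S" "open S" "z \<in> S"
  shows "(deriv ^^ n) (\<lambda>w. \<Sum>i\<in>I. f i w) z = (\<Sum>i\<in>I. (deriv ^^ n) (f i) z)"
  using assms(1,2)
proof (induction I rule: finite_induct)
  case (insert i I)
  have "(deriv ^^ n) (\<lambda>w. f i w + (\<Sum>j\<in>I. f j w)) z
      = (deriv ^^ n) (f i) z + (deriv ^^ n) (\<lambda>w. \<Sum>j\<in>I. f j w) z"
    using insert.prems assms(3,4) by (intro higher_deriv_add) (auto intro!: holomorphic_intros)
  with insert show ?case by simp
qed simp

lemma taylor_coeff_linear_combination:
  assumes "finite I" "\<And>i. i \<in> I \<Longrightarrow> f i holomorphic_on ball 0 1"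
  shows "taylor_coeff (\<lambda>z. \<Sum>i\<in>I. c i * f i z) m = (\<Sum>i\<in>I. c i * taylor_coeff (f i) m)"
proof -
  have "(deriv ^^ m) (\<lambda>z. \<Sum>i\<in>I. c i * f i z) 0 = (\<Sum>i\<in>I. (deriv ^^ m) (\<lambda>z. c i * f i z) 0)"
    using assms by (intro higher_deriv_sum[where S = "ball 0 1"]) (auto intro!: holomorphic_intros)
  also have "\<dots> = (\<Sum>i\<in>I. c i * (deriv ^^ m) (f i) 0)"
    using assms(2) by (intro sum.cong refl higher_deriv_cmult[where A = "ball 0 1"]) auto
  finally show ?thesis
    by (simp add: taylor_coeff_def sum_divide_distrib)
qed

lemma taylor_coeff_diff:
  assumes "f holomorphic_on ball 0 1" "g holomorphic_on ball 0 1"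
  shows "taylor_coeff (\<lambda>z. f z - g z) m = taylor_coeff f m - taylor_coeff g m"
  using higher_deriv_diff[OF assms, of 0 m] by (simp add: taylor_coeff_def diff_divide_distrib)

lemma taylor_coeff_power: "taylor_coeff (\<lambda>z. z ^ n) m = (if m = n then 1 else 0)"
proof -
  have "(deriv ^^ m) (\<lambda>z. z ^ n) 0 = pochhammer (of_nat (Suc n - m)) m * (0::complex) ^ (n - m)"
    using higher_deriv_power[of m 0 n 0] by simp
  moreover have "pochhammer (of_nat (Suc n - m)) m = (0::complex)" if "n < m"
    using that by (simp add: pochhammer_0_left)
  ultimately show ?thesis
    by (cases m n rule: linorder_cases) (simp_all add: taylor_coeff_def flip: pochhammer_fact)
qed

definition coeff_one_minus_powers :: "(nat \<Rightarrow> complex) \<Rightarrow> nat set \<Rightarrow> nat \<Rightarrow> complex" where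
  "coeff_one_minus_powers c N m = (if m = 0 then sum c N else 0) - (if m \<in> N then c m else 0)"

lemma taylor_coeff_one_minus_powers:
  assumes "finite N"
  shows "taylor_coeff (\<lambda>z. \<Sum>n\<in>N. c n * (1 - z ^ n)) m = coeff_one_minus_powers c N m"
proof -
  have coeff: "taylor_coeff (\<lambda>z::complex. 1 - z ^ n) m
      = (if m = 0 then 1 else 0) - (if m = n then 1 else 0)" for n
    using taylor_coeff_diff[of "\<lambda>z. z ^ 0" "\<lambda>z. z ^ n" m]
      taylor_coeff_power[of 0 m] taylor_coeff_power[of n m]
    by (simp add: holomorphic_intros)
  have "taylor_coeff (\<lambda>z. \<Sum>n\<in>N. c n * (1 - z ^ n)) m
      = (\<Sum>n\<in>N. c n * taylor_coeff (\<lambda>z. 1 - z ^ n) m)"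
    using assms by (intro taylor_coeff_linear_combination) (auto intro!: holomorphic_intros)
  also have "\<dots> = (\<Sum>n\<in>N. (if m = 0 then c n else 0) - (if m = n then c n else 0))"
    unfolding coeff by (intro sum.cong) auto
  finally show ?thesis
    using assms by (simp add: coeff_one_minus_powers_def sum_subtractf)
qed

lemma norm_add_squared_le:
  fixes x y :: "'a::real_normed_vector"
  shows "(norm (x + y))\<^sup>2 \<le> 2 * (norm x)\<^sup>2 + 2 * (norm y)\<^sup>2"
proof -
  have "(norm (x + y))\<^sup>2 \<le> (norm x + norm y)\<^sup>2"
    by (simp add: norm_triangle_ineq power_mono)
  also have "\<dots> \<le> 2 * (norm x)\<^sup>2 + 2 * (norm y)\<^sup>2"
    using sum_squares_ge_zero[of "norm x - norm y" 0] by (simp add: power2_eq_square algebra_simps)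
  finally show ?thesis .
qed

lemma suminf_norm_add_squared_le:
  fixes u v :: "nat \<Rightarrow> 'a::real_normed_vector"
  assumes "summable (\<lambda>m. (norm (u m))\<^sup>2)" "summable (\<lambda>m. (norm (v m))\<^sup>2)"
  shows "summable (\<lambda>m. (norm (u m + v m))\<^sup>2)"
    and "(\<Sum>m. (norm (u m + v m))\<^sup>2) \<le> 2 * (\<Sum>m. (norm (u m))\<^sup>2) + 2 * (\<Sum>m. (norm (v m))\<^sup>2)"
proof -
  have bound: "summable (\<lambda>m. 2 * (norm (u m))\<^sup>2 + 2 * (norm (v m))\<^sup>2)"
    using assms by (intro summable_add summable_mult)
  then show sum: "summable (\<lambda>m. (norm (u m + v m))\<^sup>2)"
    by (rule summable_comparison_test[rotated]) (auto intro: norm_add_squared_le)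
  have "(\<Sum>m. (norm (u m + v m))\<^sup>2) \<le> (\<Sum>m. 2 * (norm (u m))\<^sup>2 + 2 * (norm (v m))\<^sup>2)"
    using sum bound by (intro suminf_le norm_add_squared_le)
  also have "\<dots> = 2 * (\<Sum>m. (norm (u m))\<^sup>2) + 2 * (\<Sum>m. (norm (v m))\<^sup>2)"
    using assms by (simp add: suminf_add[symmetric] suminf_mult summable_mult)
  finally show "(\<Sum>m. (norm (u m + v m))\<^sup>2)
      \<le> 2 * (\<Sum>m. (norm (u m))\<^sup>2) + 2 * (\<Sum>m. (norm (v m))\<^sup>2)" .
qed

lemma coeff_one_minus_powers_averaging:
  fixes a :: "nat \<Rightarrow> complex"
  assumes "M < K"
  defines "A \<equiv> \<Sum>m\<le>M. a m"
  shows "a m - coeff_one_minus_powers (\<lambda>n. (if n \<le> M then - a n else 0) + A / of_nat K) {1..K} m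
       = (if M < m then a m else 0) + (if m \<in> {1..K} then A / of_nat K else 0)"
proof -
  have "A = a 0 + (\<Sum>n\<in>{1..M}. a n)"
    unfolding A_def by (simp add: atMost_atLeast0 sum.atLeast_Suc_atMost)
  moreover have "(\<Sum>n\<in>{1..K}. if n \<le> M then - a n else 0) = - (\<Sum>n\<in>{1..M}. a n)"
    using assms(1) by (subst sum.mono_neutral_cong_right[of "{1..K}" "{1..M}"]) (auto simp: sum_negf)
  ultimately have "(\<Sum>n\<in>{1..K}. (if n \<le> M then - a n else 0) + A / of_nat K) = a 0"
    using assms(1) by (simp add: sum.distrib)
  then show ?thesis
    using assms(1) by (cases "m = 0") (auto simp: coeff_one_minus_powers_def)
qed

lemma square_summable_approx_by_coeff_one_minus_powers:
  fixes a :: "nat \<Rightarrow> complex"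
  assumes a: "summable (\<lambda>m. (cmod (a m))\<^sup>2)" and e: "e > 0"
  obtains K c where "summable (\<lambda>m. (cmod (a m - coeff_one_minus_powers c {1..K} m))\<^sup>2)"
    and "(\<Sum>m. (cmod (a m - coeff_one_minus_powers c {1..K} m))\<^sup>2) < e"
proof -
  obtain M where M: "(\<Sum>i. (cmod (a (i + Suc M)))\<^sup>2) < e / 4"
  proof -
    obtain N where "\<forall>n\<ge>N. norm (\<Sum>i. (cmod (a (i + n)))\<^sup>2) < e / 4"
      using suminf_exist_split[OF _ a, of "e / 4"] e by auto
    then have "(\<Sum>i. (cmod (a (i + Suc N)))\<^sup>2) < e / 4"
      by (auto dest!: spec[of _ "Suc N"])
    then show ?thesis by (rule that)
  qed
  define A where "A = (\<Sum>m\<le>M. a m)"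
  obtain K0 :: nat where "4 * (cmod A)\<^sup>2 / e < real K0"
    using reals_Archimedean2 by blast
  then obtain K :: nat where K: "M < K" "4 * (cmod A)\<^sup>2 / e < real K"
    by (metis less_max_iff_disj lessI max.commute of_nat_max)
  define c where "c n = (if n \<le> M then - a n else 0) + A / of_nat K" for n
  define u where "u m = (if M < m then a m else 0)" for m
  define v where "v m = (if m \<in> {1..K} then A / of_nat K else 0)" for m
  have split: "a m - coeff_one_minus_powers c {1..K} m = u m + v m" for m
    unfolding c_def u_def v_def A_def using K(1) by (rule coeff_one_minus_powers_averaging)
  have u_shift: "(\<lambda>i. (cmod (u (i + Suc M)))\<^sup>2) = (\<lambda>i. (cmod (a (i + Suc M)))\<^sup>2)"
    by (simp add: u_def)
  have u_summable: "summable (\<lambda>m. (cmod (u m))\<^sup>2)"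
    using summable_ignore_initial_segment[OF a, of "Suc M"]
    unfolding summable_iff_shift[of "\<lambda>m. (cmod (u m))\<^sup>2" "Suc M", symmetric] u_shift .
  have "(\<Sum>m. (cmod (u m))\<^sup>2) = (\<Sum>i. (cmod (a (i + Suc M)))\<^sup>2)"
    using suminf_split_initial_segment[OF u_summable, of "Suc M"] by (simp add: u_shift u_def)
  with M have u_small: "(\<Sum>m. (cmod (u m))\<^sup>2) < e / 4" by simp
  have v_finite: "(cmod (v m))\<^sup>2 = 0" if "m \<notin> {1..K}" for m
    using that by (auto simp: v_def)
  have v_summable: "summable (\<lambda>m. (cmod (v m))\<^sup>2)"
    using v_finite by (intro summable_finite[of "{1..K}"]) auto
  have "(\<Sum>m. (cmod (v m))\<^sup>2) = real K * (cmod (A / of_nat K))\<^sup>2"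
    using v_finite by (subst suminf_finite[of "{1..K}"]) (auto simp: v_def)
  also have "\<dots> = (cmod A)\<^sup>2 / real K"
    using K(1) by (simp add: norm_divide power2_eq_square)
  also have "\<dots> < e / 4"
    using K e by (simp add: field_simps)
  finally have v_small: "(\<Sum>m. (cmod (v m))\<^sup>2) < e / 4" .
  show ?thesis
  proof (rule that)
    show "summable (\<lambda>m. (cmod (a m - coeff_one_minus_powers c {1..K} m))\<^sup>2)"
      unfolding split by (rule suminf_norm_add_squared_le(1)[OF u_summable v_summable])
    show "(\<Sum>m. (cmod (a m - coeff_one_minus_powers c {1..K} m))\<^sup>2) < e"
      unfolding split using suminf_norm_add_squared_le(2)[OF u_summable v_summable] u_small v_small e
      by linarith
  qed
qed

lemma H2_approx_by_one_minus_powers: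
  assumes f: "f \<in> H2" and e: "e > 0"
  obtains N c where "finite N" "N \<subseteq> {1..}"
    "h2_norm (\<lambda>z. f z - (\<Sum>n\<in>N. c n * (1 - z ^ n))) < e"
proof -
  have hol: "f holomorphic_on ball 0 1" and a: "summable (\<lambda>m. (cmod (taylor_coeff f m))\<^sup>2)"
    using f by (auto simp: H2_def)
  obtain K c where "(\<Sum>m. (cmod (taylor_coeff f m - coeff_one_minus_powers c {1..K} m))\<^sup>2) < e\<^sup>2"
    by (rule square_summable_approx_by_coeff_one_minus_powers[OF a, of "e\<^sup>2"]) (use e in auto)
  moreover have "taylor_coeff (\<lambda>z. f z - (\<Sum>n\<in>{1..K}. c n * (1 - z ^ n))) m
      = taylor_coeff f m - coeff_one_minus_powers c {1..K} m" for m
    using hol by (simp add: taylor_coeff_diff taylor_coeff_one_minus_powers holomorphic_intros)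
  ultimately have "h2_norm (\<lambda>z. f z - (\<Sum>n\<in>{1..K}. c n * (1 - z ^ n))) < e"
    using e by (simp add: h2_norm_def real_less_lsqrt)
  then show ?thesis
    by (rule that[rotated 2]) auto
qed

lemma IminusS_eq: "IminusS f z = (1 - z) * f z"
  by (simp add: IminusS_def shiftS_def algebra_simps)

lemma Top_IminusS_eq_IminusS_Wop:
  assumes "z \<noteq> 1"
  shows "Top n (IminusS f) z = IminusS (Wop n f) z"
  using assms by (simp add: IminusS_eq Top_def Wop_def)

lemma IminusS_hk:
  assumes "z \<noteq> 1"
  shows "IminusS (hk k) z = Ln (1 - z ^ k) - Ln (1 - z) - of_real (ln (real k))"
  using assms by (simp add: IminusS_eq hk_def)

lemma IminusS_hk_power:
  assumes "z ^ n \<noteq> 1" "k \<ge> 1"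
  shows "IminusS (hk k) (z ^ n) = IminusS (hk (n * k)) z - IminusS (hk n) z"
proof -
  from assms(1) have "z \<noteq> 1" "n \<ge> 1"
    by (auto simp: Suc_le_eq intro: Nat.gr0I)
  then have "ln (real (n * k)) = ln (real n) + ln (real k)"
    using assms(2) by (simp add: ln_mult)
  with assms \<open>z \<noteq> 1\<close> show ?thesis
    by (simp add: IminusS_hk power_mult)
qed

lemma Top_hspan:
  assumes n: "n \<ge> 1" and g: "g \<in> hspan"
  shows "Top n g \<in> hspan"
proof (cases "n = 1")
  case True
  then show ?thesis using g by (simp add: Top_def)
next
  case False
  with n have n2: "n \<ge> 2" by simp
  from g obtain F c where F: "finite F" "F \<subseteq> {2..}"
    and gz: "\<forall>z\<in>ball 0 1. g z = (\<Sum>k\<in>F. c k * IminusS (hk k) z)"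
    unfolding hspan_def by blast
  define F' where "F' = (\<lambda>k. n * k) ` F \<union> {n}"
  define c' where "c' m = (if m = n then - (\<Sum>k\<in>F. c k) else c (m div n))" for m
  have n_notin: "n \<notin> (\<lambda>k. n * k) ` F" using F(2) n2 by auto
  have inj: "inj_on (\<lambda>k. n * k) F" using n2 by (auto simp: inj_on_def)
  have "finite F'" "F' \<subseteq> {2..}"
    using F n2 unfolding F'_def
    by (auto simp: subset_iff intro: order.trans[OF _ mult_le_mono[of 1 _ 2]])
  moreover have "Top n g z = (\<Sum>m\<in>F'. c' m * IminusS (hk m) z)" if z: "z \<in> ball 0 1" for z
  proof -
    have zn: "z ^ n \<in> ball 0 1"
      using z n by (simp add: norm_power power_less_one_iff)
    then have "z ^ n \<noteq> 1" by auto
    have "Top n g z = (\<Sum>k\<in>F. c k * IminusS (hk k) (z ^ n))"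
      using gz zn by (simp add: Top_def)
    also have "\<dots> = (\<Sum>k\<in>F. c k * IminusS (hk (n * k)) z - c k * IminusS (hk n) z)"
      using F(2) \<open>z ^ n \<noteq> 1\<close>
      by (intro sum.cong) (auto simp: IminusS_hk_power right_diff_distrib)
    also have "\<dots> = (\<Sum>k\<in>F. c k * IminusS (hk (n * k)) z) - (\<Sum>k\<in>F. c k) * IminusS (hk n) z"
      by (simp add: sum_subtractf sum_distrib_right)
    also have "(\<Sum>k\<in>F. c k * IminusS (hk (n * k)) z)
        = (\<Sum>m\<in>(\<lambda>k. n * k) ` F. c' m * IminusS (hk m) z)"
      using inj F(2) n2 by (subst sum.reindex) (auto simp: c'_def intro!: sum.cong)
    also have "\<dots> - (\<Sum>k\<in>F. c k) * IminusS (hk n) z = (\<Sum>m\<in>F'. c' m * IminusS (hk m) z)"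
      unfolding F'_def using F(1) n_notin by (simp add: c'_def)
    finally show ?thesis .
  qed
  ultimately show ?thesis unfolding hspan_def by blast
qed

theorem mainTheorem7:
  shows "(\<forall>n\<ge>1. \<forall>f\<in>H2. \<forall>z\<in>ball 0 1.
            Top n (IminusS f) z = IminusS (Wop n f) z)
       \<and> (\<forall>n\<ge>1. \<forall>g\<in>hspan. Top n g \<in> hspan)
       \<and> (\<forall>f\<in>H2. \<forall>e>0. \<exists>N c. finite N \<and> N \<subseteq> {1..} \<and>
            h2_norm (\<lambda>z. f z - (\<Sum>n\<in>N. c n * Top n (\<lambda>w. 1 - w) z)) < e)"
proof (intro conjI allI impI ballI)
  fix n :: nat and f and z :: complex
  assume "z \<in> ball 0 1"
  then show "Top n (IminusS f) z = IminusS (Wop n f) z"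
    by (intro Top_IminusS_eq_IminusS_Wop) auto
next
  fix n :: nat and g
  assume "n \<ge> 1" "g \<in> hspan"
  then show "Top n g \<in> hspan" by (rule Top_hspan)
next
  fix f :: "complex \<Rightarrow> complex" and e :: real
  assume "f \<in> H2" "e > 0"
  then obtain N c where "finite N" "N \<subseteq> {1..}"
    "h2_norm (\<lambda>z. f z - (\<Sum>n\<in>N. c n * (1 - z ^ n))) < e"
    by (rule H2_approx_by_one_minus_powers)
  then show "\<exists>N c. finite N \<and> N \<subseteq> {1..} \<and>
      h2_norm (\<lambda>z. f z - (\<Sum>n\<in>N. c n * Top n (\<lambda>w. 1 - w) z)) < e"
    by (auto simp: Top_def)
qed

end
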